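(* Let $X$ be a finite-dimensional real vector space, $\phi:X\to\mathbf{R}$ a strictly convex norm, $K\subseteq X$ closed, $1<\lambda<\infty$, and $K_\lambda=(X\setminus K)\cap\{x:\rho^\phi_K(x)\ge\lambda\}$. Then there exists $\omega_\lambda:\mathbf{R}\to\mathbf{R}$ with $\lim_{t\downarrow0}\omega_\lambda(t)=0$ such that $$\phi(a-b)\le\delta^\phi_K(x)\,\omega_\lambda\bigl(\phi(x-y)/\delta^\phi_K(x)\bigr)$$ for all $x\in K_\lambda$, $y\in X$, $a\in\xi^\phi_K(x)$, $b\in\xi^\phi_K(y)$.
   Context: A norm $\phi$ is strictly convex if $\phi(a+b)=\phi(a)+\phi(b)$ implies $\phi(b)a=\phi(a)b$. For closed $K$: $\delta^\phi_K(x)=\inf\{\phi(y-x):y\in K\}$; $\xi^\phi_K(x)=K\cap\{w:\phi(x-w)=\delta^\phi_K(x)\}$; $\rho^\phi_K(x)=\sup\bigl(\mathbf{R}\cap\{s:\delta^\phi_K(w+s(x-w))=s\,\delta^\phi_K(x)\}\bigr)$ for any $w\in\xi^\phi_K(x)$ (independent of the choice of $w$). *)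

theory Defs
  imports "HOL-Analysis.Analysis"
begin

definition is_norm :: "('a::real_vector \<Rightarrow> real) \<Rightarrow> bool" where
  "is_norm \<phi> \<longleftrightarrow>
     (\<forall>x. 0 \<le> \<phi> x) \<and> (\<forall>x. \<phi> x = 0 \<longleftrightarrow> x = 0) \<and>
     (\<forall>c x. \<phi> (c *\<^sub>R x) = \<bar>c\<bar> * \<phi> x) \<and>
     (\<forall>x y. \<phi> (x + y) \<le> \<phi> x + \<phi> y)"

definition strictly_convex_norm :: "('a::real_vector \<Rightarrow> real) \<Rightarrow> bool" where
  "strictly_convex_norm \<phi> \<longleftrightarrow>
     (\<forall>a b. \<phi> (a + b) = \<phi> a + \<phi> b \<longrightarrow> \<phi> b *\<^sub>R a = \<phi> a *\<^sub>R b)"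

definition dist_phi :: "('a::real_vector \<Rightarrow> real) \<Rightarrow> 'a set \<Rightarrow> 'a \<Rightarrow> real" where
  "dist_phi \<phi> K x = Inf {\<phi> (y - x) | y. y \<in> K}"

definition nearest_phi :: "('a::real_vector \<Rightarrow> real) \<Rightarrow> 'a set \<Rightarrow> 'a \<Rightarrow> 'a set" where
  "nearest_phi \<phi> K x = K \<inter> {w. \<phi> (x - w) = dist_phi \<phi> K x}"

text \<open>rho, valued in the extended reals since the supremum may be infinite;
  w is any point of nearest_phi (the paper notes independence of the choice).\<close>
definition reach_phi :: "('a::real_vector \<Rightarrow> real) \<Rightarrow> 'a set \<Rightarrow> 'a \<Rightarrow> ereal" where
  "reach_phi \<phi> K x =
     (let w = (SOME w. w \<in> nearest_phi \<phi> K x)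
      in Sup (ereal ` {s::real. dist_phi \<phi> K (w + s *\<^sub>R (x - w)) = s * dist_phi \<phi> K x}))"

end

(*
  Fix 1 < \<mu> < \<lambda>. If \<rho>(x) > \<mu> and a is a nearest point of x, then for some s > \<mu> the
  ball of radius s \<delta>(x) about a + s (x - a) has no point of K in its interior; by strict
  convexity this makes a the unique nearest point. For b nearest to y, the normalised vectors
  u = (x - a) / \<delta>(x) and b' = (b - a) / \<delta>(x) satisfy \<phi> u = 1, \<phi> (b' - u) \<le> 1 + 2 t with
  t = \<phi> (x - y) / \<delta>(x), and \<phi> (b' - \<mu> u) \<ge> \<mu>; so \<omega>(t) can be taken to be the supremum of \<phi> b'
  over all such configurations. At t = 0 strict convexity forces b' = 0, since the unit ball
  about u touches the ball of radius \<mu> about \<mu> u only at 0, and compactness of the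
  configurations turns this into \<omega>(t) \<rightarrow> 0.
*)

theory Submission imports Defs begin

lemma is_norm_nonneg: "is_norm \<phi> \<Longrightarrow> 0 \<le> \<phi> x"
  by (simp add: is_norm_def)

lemma is_norm_eq_0_iff: "is_norm \<phi> \<Longrightarrow> \<phi> x = 0 \<longleftrightarrow> x = 0"
  by (simp add: is_norm_def)

lemma is_norm_scaleR: "is_norm \<phi> \<Longrightarrow> \<phi> (c *\<^sub>R x) = \<bar>c\<bar> * \<phi> x"
  by (simp add: is_norm_def)

lemma is_norm_triangle: "is_norm \<phi> \<Longrightarrow> \<phi> (x + y) \<le> \<phi> x + \<phi> y"
  by (simp add: is_norm_def)

lemma is_norm_minus_commute: "is_norm \<phi> \<Longrightarrow> \<phi> (x - y) = \<phi> (y - x)"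
  using is_norm_scaleR[of \<phi> "-1" "x - y"] by simp

lemma is_norm_triangle_diff: "is_norm \<phi> \<Longrightarrow> \<phi> (x - z) \<le> \<phi> (x - y) + \<phi> (y - z)"
  using is_norm_triangle[of \<phi> "x - y" "y - z"] by simp

lemma is_norm_unit_exists:
  fixes \<phi> :: "'a::euclidean_space \<Rightarrow> real"
  assumes N: "is_norm \<phi>"
  obtains u where "\<phi> u = 1"
proof -
  obtain e :: 'a where "e \<in> Basis" using nonempty_Basis by blast
  then have "0 < \<phi> e" using is_norm_nonneg[OF N, of e] is_norm_eq_0_iff[OF N, of e] by auto
  then have "\<phi> ((1 / \<phi> e) *\<^sub>R e) = 1" by (simp add: is_norm_scaleR[OF N])
  then show ?thesis by (rule that)
qed

lemma is_norm_convex_on: "is_norm \<phi> \<Longrightarrow> convex_on UNIV \<phi>"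
proof (rule convex_onI)
  fix t x y assume N: "is_norm \<phi>" and t: "0 < t" "t < (1::real)"
  have "\<phi> ((1 - t) *\<^sub>R x + t *\<^sub>R y) \<le> \<phi> ((1 - t) *\<^sub>R x) + \<phi> (t *\<^sub>R y)"
    using is_norm_triangle[OF N] .
  also have "\<dots> = (1 - t) * \<phi> x + t * \<phi> y"
    using t by (simp add: is_norm_scaleR[OF N])
  finally show "\<phi> ((1 - t) *\<^sub>R x + t *\<^sub>R y) \<le> (1 - t) * \<phi> x + t * \<phi> y" .
qed simp

lemma continuous_on_is_norm:
  fixes \<phi> :: "'a::euclidean_space \<Rightarrow> real"
  assumes "is_norm \<phi>" and "continuous_on S f"
  shows "continuous_on S (\<lambda>x. \<phi> (f x))"
proof -
  have "continuous_on UNIV \<phi>"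
    using convex_on_continuous[OF open_UNIV is_norm_convex_on[OF assms(1)]] by blast
  then show ?thesis
    using assms(2) by (rule continuous_on_compose2) simp
qed

lemma is_norm_sublevel_bounded:
  fixes \<phi> :: "'a::euclidean_space \<Rightarrow> real"
  assumes N: "is_norm \<phi>"
  shows "bounded {x. \<phi> x \<le> r}"
proof -
  obtain e :: 'a where "e \<in> Basis" using nonempty_Basis by blast
  then have "sphere (0::'a) 1 \<noteq> {}" by (auto simp: norm_Basis)
  then obtain x0 where x0: "x0 \<in> sphere 0 1" "\<And>y. y \<in> sphere 0 1 \<Longrightarrow> \<phi> x0 \<le> \<phi> y"
    using continuous_attains_inf[OF compact_sphere _ continuous_on_is_norm[OF N continuous_on_id]]
    by blast
  have pos: "0 < \<phi> x0"
    using x0(1) is_norm_nonneg[OF N, of x0] is_norm_eq_0_iff[OF N, of x0] by auto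
  have "norm x \<le> r / \<phi> x0" if "\<phi> x \<le> r" for x
  proof (cases "x = 0")
    case True
    then have "0 \<le> r" using that is_norm_eq_0_iff[OF N, of 0] by simp
    then show ?thesis using True pos by simp
  next
    case False
    have "\<phi> x0 \<le> \<phi> ((1 / norm x) *\<^sub>R x)" using x0(2) False by simp
    also have "\<dots> = \<phi> x / norm x" by (simp add: is_norm_scaleR[OF N])
    finally show ?thesis using False pos that by (simp add: field_simps)
  qed
  then show ?thesis unfolding bounded_iff by blast
qed

lemma strictly_convex_norm_tangent_balls:
  assumes N: "is_norm \<phi>" and SC: "strictly_convex_norm \<phi>" and s: "1 < s"
    and v: "\<phi> v = d" and inner: "\<phi> (b - v) \<le> d" and outer: "s * d \<le> \<phi> (b - s *\<^sub>R v)"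
  shows "b = 0"
proof -
  define A where "A = b - v"
  define B where "B = (1 - s) *\<^sub>R v"
  have sum: "A + B = b - s *\<^sub>R v" by (simp add: A_def B_def algebra_simps)
  have \<phi>B: "\<phi> B = (s - 1) * d" using s v by (simp add: B_def is_norm_scaleR[OF N])
  have "\<phi> (A + B) \<le> \<phi> A + \<phi> B" by (rule is_norm_triangle[OF N])
  moreover have "\<phi> A \<le> d" using inner by (simp add: A_def)
  moreover have "s * d \<le> \<phi> (A + B)" using outer by (simp only: sum)
  ultimately have \<phi>A: "\<phi> A = d" and "\<phi> (A + B) = \<phi> A + \<phi> B"
    using \<phi>B by (auto simp: left_diff_distrib)
  then have "\<phi> B *\<^sub>R A = \<phi> A *\<^sub>R B" using SC by (simp add: strictly_convex_norm_def)
  then have "((s - 1) * d) *\<^sub>R (b - v) = d *\<^sub>R ((1 - s) *\<^sub>R v)"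
    unfolding \<phi>A \<phi>B by (simp add: A_def B_def)
  then have "((s - 1) * d) *\<^sub>R b = 0" by (simp add: algebra_simps)
  then consider "d = 0" | "b = 0" using s by auto
  then show "b = 0"
  proof cases
    case 1
    then show ?thesis using v inner is_norm_nonneg[OF N, of "b - v"] is_norm_eq_0_iff[OF N] by auto
  qed
qed

lemma dist_phi_le:
  assumes "is_norm \<phi>" and "k \<in> K"
  shows "dist_phi \<phi> K x \<le> \<phi> (k - x)"
  unfolding dist_phi_def
proof (rule cInf_lower)
  show "\<phi> (k - x) \<in> {\<phi> (y - x) |y. y \<in> K}" using assms(2) by blast
  show "bdd_below {\<phi> (y - x) |y. y \<in> K}"
    using is_norm_nonneg[OF assms(1)] by (auto intro!: bdd_belowI[of _ 0])
qed

lemma dist_phi_pos: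
  assumes "is_norm \<phi>" and "a \<in> nearest_phi \<phi> K x" and "x \<notin> K"
  shows "0 < dist_phi \<phi> K x"
  using assms is_norm_nonneg[OF assms(1), of "x - a"] is_norm_eq_0_iff[OF assms(1), of "x - a"]
  by (auto simp: nearest_phi_def)

definition tangent_sizes :: "('a::real_vector \<Rightarrow> real) \<Rightarrow> real \<Rightarrow> real \<Rightarrow> real set" where
  "tangent_sizes \<phi> \<mu> t = {\<phi> b | u b. \<phi> u = 1 \<and> \<phi> (b - u) \<le> 1 + t \<and> \<mu> \<le> \<phi> (b - \<mu> *\<^sub>R u)}"

definition tangent_modulus :: "('a::real_vector \<Rightarrow> real) \<Rightarrow> real \<Rightarrow> real \<Rightarrow> real" where
  "tangent_modulus \<phi> \<mu> t = Sup (tangent_sizes \<phi> \<mu> t)"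

lemma bdd_above_tangent_sizes:
  assumes "is_norm \<phi>"
  shows "bdd_above (tangent_sizes \<phi> \<mu> t)"
proof (rule bdd_aboveI)
  fix r assume "r \<in> tangent_sizes \<phi> \<mu> t"
  then obtain u b where "r = \<phi> b" "\<phi> u = 1" "\<phi> (b - u) \<le> 1 + t" by (auto simp: tangent_sizes_def)
  moreover have "\<phi> b \<le> \<phi> (b - u) + \<phi> u" using is_norm_triangle[OF assms, of "b - u" u] by simp
  ultimately show "r \<le> 2 + t" by linarith
qed

lemma zero_in_tangent_sizes:
  fixes \<phi> :: "'a::euclidean_space \<Rightarrow> real"
  assumes N: "is_norm \<phi>" and "0 \<le> t"
  shows "0 \<in> tangent_sizes \<phi> \<mu> t"
proof -
  obtain u where u: "\<phi> u = 1" using is_norm_unit_exists[OF N] by blast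
  have "\<phi> (0 - u) \<le> 1 + t" using u assms(2) is_norm_minus_commute[OF N, of 0 u] by simp
  moreover have "\<mu> \<le> \<phi> (0 - \<mu> *\<^sub>R u)"
    using u is_norm_minus_commute[OF N, of 0 "\<mu> *\<^sub>R u"] by (simp add: is_norm_scaleR[OF N])
  ultimately show ?thesis
    using u is_norm_eq_0_iff[OF N, of 0] unfolding tangent_sizes_def by force
qed

lemma tangent_modulus_upper:
  assumes N: "is_norm \<phi>" and d: "0 < d" and v: "\<phi> v = d"
    and inner: "\<phi> (c - v) \<le> d * (1 + t)" and outer: "\<mu> * d \<le> \<phi> (c - \<mu> *\<^sub>R v)"
  shows "\<phi> c \<le> d * tangent_modulus \<phi> \<mu> t"
proof -
  define u where "u = (1 / d) *\<^sub>R v"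
  define b where "b = (1 / d) *\<^sub>R c"
  have "\<phi> u = 1" using v d by (simp add: u_def is_norm_scaleR[OF N])
  moreover have "\<phi> (b - u) \<le> 1 + t"
  proof -
    have "b - u = (1 / d) *\<^sub>R (c - v)" by (simp add: b_def u_def algebra_simps)
    then have "\<phi> (b - u) = \<phi> (c - v) / d" using d by (simp add: is_norm_scaleR[OF N])
    then show ?thesis using inner d by (simp add: pos_divide_le_eq mult.commute)
  qed
  moreover have "\<mu> \<le> \<phi> (b - \<mu> *\<^sub>R u)"
  proof -
    have "b - \<mu> *\<^sub>R u = (1 / d) *\<^sub>R (c - \<mu> *\<^sub>R v)" by (simp add: b_def u_def algebra_simps)
    then have "\<phi> (b - \<mu> *\<^sub>R u) = \<phi> (c - \<mu> *\<^sub>R v) / d" using d by (simp add: is_norm_scaleR[OF N])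
    then show ?thesis using outer d by (simp add: pos_le_divide_eq)
  qed
  ultimately have "\<phi> b \<in> tangent_sizes \<phi> \<mu> t" unfolding tangent_sizes_def by blast
  then have "\<phi> b \<le> tangent_modulus \<phi> \<mu> t"
    unfolding tangent_modulus_def by (rule cSup_upper[OF _ bdd_above_tangent_sizes[OF N]])
  moreover have "\<phi> b = \<phi> c / d" using d by (simp add: b_def is_norm_scaleR[OF N])
  ultimately show ?thesis using d by (simp add: field_simps)
qed

lemma tangent_modulus_nonneg:
  fixes \<phi> :: "'a::euclidean_space \<Rightarrow> real"
  assumes "is_norm \<phi>" and "0 \<le> t"
  shows "0 \<le> tangent_modulus \<phi> \<mu> t"
  unfolding tangent_modulus_def
  using zero_in_tangent_sizes[OF assms] by (rule cSup_upper[OF _ bdd_above_tangent_sizes[OF assms(1)]])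

lemma tangent_modulus_le:
  fixes \<phi> :: "'a::euclidean_space \<Rightarrow> real"
  assumes N: "is_norm \<phi>" and "0 \<le> t"
    and le: "\<And>u b. \<phi> u = 1 \<Longrightarrow> \<phi> (b - u) \<le> 1 + t \<Longrightarrow> \<mu> \<le> \<phi> (b - \<mu> *\<^sub>R u) \<Longrightarrow> \<phi> b \<le> r"
  shows "tangent_modulus \<phi> \<mu> t \<le> r"
  unfolding tangent_modulus_def
proof (rule cSup_least)
  show "tangent_sizes \<phi> \<mu> t \<noteq> {}" using zero_in_tangent_sizes[OF N assms(2)] by blast
qed (use le in \<open>auto simp: tangent_sizes_def\<close>)

lemma compact_tangent_configurations:
  fixes \<phi> :: "'a::euclidean_space \<Rightarrow> real"
  assumes N: "is_norm \<phi>"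
  shows "compact {(u, b). \<phi> u = 1 \<and> \<phi> (b - u) \<le> r \<and> \<mu> \<le> \<phi> (b - \<mu> *\<^sub>R u) \<and> \<epsilon> \<le> \<phi> b}"
    (is "compact ?S")
proof -
  have "closed ?S"
    unfolding case_prod_unfold
    by (intro closed_Collect_conj closed_Collect_eq closed_Collect_le
        continuous_on_is_norm[OF N] continuous_intros)
  moreover have "bounded ?S"
  proof (rule bounded_subset)
    show "bounded ({u. \<phi> u \<le> 1} \<times> {b. \<phi> b \<le> r + 1})"
      by (intro bounded_Times is_norm_sublevel_bounded[OF N])
    have "\<phi> b \<le> r + 1" if "\<phi> u = 1" "\<phi> (b - u) \<le> r" for u b :: 'a
      using that is_norm_triangle[OF N, of "b - u" u] by simp
    then show "?S \<subseteq> {u. \<phi> u \<le> 1} \<times> {b. \<phi> b \<le> r + 1}" by auto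
  qed
  ultimately show ?thesis by (simp add: compact_eq_bounded_closed)
qed

lemma strictly_convex_norm_almost_tangent:
  fixes \<phi> :: "'a::euclidean_space \<Rightarrow> real"
  assumes N: "is_norm \<phi>" and SC: "strictly_convex_norm \<phi>" and \<mu>: "1 < \<mu>" and \<epsilon>: "0 < \<epsilon>"
  obtains h where "0 < h"
    and "\<And>u b. \<phi> u = 1 \<Longrightarrow> \<phi> (b - u) \<le> 1 + h \<Longrightarrow> \<mu> \<le> \<phi> (b - \<mu> *\<^sub>R u) \<Longrightarrow> \<phi> b < \<epsilon>"
proof -
  define S where "S = {(u, b). \<phi> u = 1 \<and> \<phi> (b - u) \<le> 2 \<and> \<mu> \<le> \<phi> (b - \<mu> *\<^sub>R u) \<and> \<epsilon> \<le> \<phi> b}"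
  have "compact S" unfolding S_def by (rule compact_tangent_configurations[OF N])
  have "\<exists>m>1. \<forall>(u, b)\<in>S. m \<le> \<phi> (b - u)"
  proof (cases "S = {}")
    case False
    have "continuous_on S (\<lambda>q. \<phi> (snd q - fst q))"
      by (intro continuous_on_is_norm[OF N] continuous_intros)
    then obtain p where p: "p \<in> S" and min: "\<And>q. q \<in> S \<Longrightarrow> \<phi> (snd p - fst p) \<le> \<phi> (snd q - fst q)"
      using continuous_attains_inf[OF \<open>compact S\<close> False] by blast
    have "1 < \<phi> (snd p - fst p)"
    proof (rule ccontr)
      assume "\<not> 1 < \<phi> (snd p - fst p)"
      then have "snd p = 0"
        using p \<mu> by (intro strictly_convex_norm_tangent_balls[OF N SC \<mu>, of "fst p" 1]) (auto simp: S_def)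
      then show False using p \<epsilon> is_norm_eq_0_iff[OF N, of 0] by (auto simp: S_def)
    qed
    then show ?thesis using min by fastforce
  qed (intro exI[of _ 2], simp)
  then obtain m where m: "1 < m" "\<And>u b. (u, b) \<in> S \<Longrightarrow> m \<le> \<phi> (b - u)" by blast
  define h where "h = min ((m - 1) / 2) 1"
  have h: "0 < h" "h \<le> 1" "h < m - 1" using m(1) by (auto simp: h_def min_less_iff_disj)
  show ?thesis
  proof (rule that[OF h(1)])
    fix u b assume u: "\<phi> u = 1" and b: "\<phi> (b - u) \<le> 1 + h" and \<mu>u: "\<mu> \<le> \<phi> (b - \<mu> *\<^sub>R u)"
    show "\<phi> b < \<epsilon>"
    proof (rule ccontr)
      assume "\<not> \<phi> b < \<epsilon>"
      with u b \<mu>u h(2) have "(u, b) \<in> S" by (simp add: S_def)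
      then have "m \<le> \<phi> (b - u)" by (rule m(2))
      then show False using b h(3) by linarith
    qed
  qed
qed

lemma tendsto_tangent_modulus:
  fixes \<phi> :: "'a::euclidean_space \<Rightarrow> real"
  assumes N: "is_norm \<phi>" and SC: "strictly_convex_norm \<phi>" and \<mu>: "1 < \<mu>"
  shows "(tangent_modulus \<phi> \<mu> \<longlongrightarrow> 0) (at_right 0)"
proof (rule tendstoI)
  fix \<epsilon> :: real assume "0 < \<epsilon>"
  then obtain h where h: "0 < h"
    "\<And>u b. \<phi> u = 1 \<Longrightarrow> \<phi> (b - u) \<le> 1 + h \<Longrightarrow> \<mu> \<le> \<phi> (b - \<mu> *\<^sub>R u) \<Longrightarrow> \<phi> b < \<epsilon> / 2"
    using strictly_convex_norm_almost_tangent[OF N SC \<mu>, of "\<epsilon> / 2"] by auto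
  have "dist (tangent_modulus \<phi> \<mu> t) 0 < \<epsilon>" if "0 < t" "t < h" for t
  proof -
    have "tangent_modulus \<phi> \<mu> t \<le> \<epsilon> / 2"
      using that h(2) by (intro tangent_modulus_le[OF N]) force+
    then show ?thesis using tangent_modulus_nonneg[OF N, of t \<mu>] that \<open>0 < \<epsilon>\<close> by simp
  qed
  then show "\<forall>\<^sub>F t in at_right 0. dist (tangent_modulus \<phi> \<mu> t) 0 < \<epsilon>"
    unfolding eventually_at_right_field using h(1) by blast
qed

lemma tangent_modulus_estimate:
  assumes N: "is_norm \<phi>" and d: "0 < d" and xa: "\<phi> (x - a) = d" and \<mu>s: "\<mu> \<le> s"
    and ball: "s * d \<le> \<phi> (b - (a + s *\<^sub>R (x - a)))" and near: "\<phi> (y - b) \<le> \<phi> (y - a)"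
  shows "\<phi> (a - b) \<le> d * tangent_modulus \<phi> \<mu> (2 * \<phi> (x - y) / d)"
proof -
  define v where "v = x - a"
  define c where "c = b - a"
  have "\<phi> (c - v) \<le> \<phi> (b - y) + \<phi> (y - x)"
    using is_norm_triangle_diff[OF N, of b x y] by (simp add: c_def v_def)
  also have "\<dots> \<le> \<phi> (a - y) + \<phi> (x - y)"
    using near is_norm_minus_commute[OF N] by (metis add_mono order_refl)
  also have "\<dots> \<le> d + 2 * \<phi> (x - y)"
    using is_norm_triangle_diff[OF N, of a y x] xa is_norm_minus_commute[OF N, of x a] by simp
  also have "\<dots> = d * (1 + 2 * \<phi> (x - y) / d)" using d by (simp add: field_simps)
  finally have inner: "\<phi> (c - v) \<le> d * (1 + 2 * \<phi> (x - y) / d)" .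
  have "s * d \<le> \<phi> ((c - \<mu> *\<^sub>R v) + (\<mu> - s) *\<^sub>R v)"
    using ball by (simp add: c_def v_def algebra_simps)
  also have "\<dots> \<le> \<phi> (c - \<mu> *\<^sub>R v) + \<phi> ((\<mu> - s) *\<^sub>R v)"
    by (rule is_norm_triangle[OF N])
  also have "\<phi> ((\<mu> - s) *\<^sub>R v) = (s - \<mu>) * d"
    using \<mu>s xa by (simp add: is_norm_scaleR[OF N] v_def)
  finally have outer: "\<mu> * d \<le> \<phi> (c - \<mu> *\<^sub>R v)" by (simp add: algebra_simps)
  have "\<phi> c \<le> d * tangent_modulus \<phi> \<mu> (2 * \<phi> (x - y) / d)"
    using tangent_modulus_upper[OF N d _ inner outer] xa by (simp add: v_def)
  then show ?thesis using is_norm_minus_commute[OF N, of a b] by (simp add: c_def)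
qed

lemma reach_phi_gtE:
  assumes N: "is_norm \<phi>" and SC: "strictly_convex_norm \<phi>"
    and a: "a \<in> nearest_phi \<phi> K x" and \<mu>: "1 < \<mu>" and reach: "ereal \<mu> < reach_phi \<phi> K x"
  obtains s where "\<mu> < s" and "dist_phi \<phi> K (a + s *\<^sub>R (x - a)) = s * dist_phi \<phi> K x"
proof -
  define d where "d = dist_phi \<phi> K x"
  define w where "w = (SOME w. w \<in> nearest_phi \<phi> K x)"
  have "w \<in> nearest_phi \<phi> K x" unfolding w_def using a by (rule someI)
  then have xw: "\<phi> (x - w) = d" by (simp add: nearest_phi_def d_def)
  have "ereal \<mu> < Sup (ereal ` {s. dist_phi \<phi> K (w + s *\<^sub>R (x - w)) = s * d})"
    using reach by (simp add: reach_phi_def Let_def w_def d_def)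
  then obtain s where s: "\<mu> < s" and ds: "dist_phi \<phi> K (w + s *\<^sub>R (x - w)) = s * d"
    unfolding less_Sup_iff by auto
  have aK: "a \<in> K" and xa: "\<phi> (x - a) = d" using a by (auto simp: nearest_phi_def d_def)
  \<comment> \<open>the point chosen by SOME in reach_phi is a itself\<close>
  have "a - w = 0"
  proof (rule strictly_convex_norm_tangent_balls[OF N SC _ xw])
    show "1 < s" using s \<mu> by simp
    show "\<phi> (a - w - (x - w)) \<le> d" using xa is_norm_minus_commute[OF N, of x a] by simp
    show "s * d \<le> \<phi> (a - w - s *\<^sub>R (x - w))"
      using dist_phi_le[OF N aK, of "w + s *\<^sub>R (x - w)"] ds by (simp add: algebra_simps)
  qed
  then show ?thesis using that s ds by (simp add: d_def)
qed

lemma nearest_phi_diff_le_tangent_modulus: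
  assumes N: "is_norm \<phi>" and SC: "strictly_convex_norm \<phi>" and \<mu>: "1 < \<mu>"
    and x: "x \<notin> K" "ereal \<mu> < reach_phi \<phi> K x"
    and a: "a \<in> nearest_phi \<phi> K x" and b: "b \<in> nearest_phi \<phi> K y"
  shows "\<phi> (a - b) \<le> dist_phi \<phi> K x * tangent_modulus \<phi> \<mu> (2 * \<phi> (x - y) / dist_phi \<phi> K x)"
proof -
  obtain s where s: "\<mu> < s" and ds: "dist_phi \<phi> K (a + s *\<^sub>R (x - a)) = s * dist_phi \<phi> K x"
    using reach_phi_gtE[OF N SC a \<mu> x(2)] by blast
  have aK: "a \<in> K" and xa: "\<phi> (x - a) = dist_phi \<phi> K x" using a by (simp_all add: nearest_phi_def)
  have "b \<in> K" using b by (simp add: nearest_phi_def)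
  then have "s * dist_phi \<phi> K x \<le> \<phi> (b - (a + s *\<^sub>R (x - a)))"
    using dist_phi_le[OF N, of b K "a + s *\<^sub>R (x - a)"] ds by simp
  moreover have "\<phi> (y - b) \<le> \<phi> (y - a)"
    using b dist_phi_le[OF N aK, of y] is_norm_minus_commute[OF N, of a y]
    by (simp add: nearest_phi_def)
  ultimately show ?thesis
    by (rule tangent_modulus_estimate[OF N dist_phi_pos[OF N a x(1)] xa less_imp_le[OF s]])
qed

theorem lemma3p2:
  fixes \<phi> :: "'a::euclidean_space \<Rightarrow> real" and K :: "'a set" and lam :: real
  assumes "is_norm \<phi>" and "strictly_convex_norm \<phi>" and "closed K" and "1 < lam"
  shows "\<exists>\<omega> :: real \<Rightarrow> real. (\<omega> \<longlongrightarrow> 0) (at_right 0) \<and>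
    (\<forall>x \<in> (- K) \<inter> {x. reach_phi \<phi> K x \<ge> ereal lam}. \<forall>y a b.
       a \<in> nearest_phi \<phi> K x \<longrightarrow> b \<in> nearest_phi \<phi> K y \<longrightarrow>
       \<phi> (a - b) \<le> dist_phi \<phi> K x * \<omega> (\<phi> (x - y) / dist_phi \<phi> K x))"
proof -
  define \<mu> where "\<mu> = (1 + lam) / 2"
  have \<mu>: "1 < \<mu>" "ereal \<mu> < ereal lam" using assms(4) by (auto simp: \<mu>_def)
  define \<omega> where "\<omega> t = tangent_modulus \<phi> \<mu> (2 * t)" for t
  have "filterlim (\<lambda>t::real. 2 * t) (at_right 0) (at_right 0)"
    by (rule filterlim_times_pos[OF filterlim_ident]) simp_all
  then have "(\<omega> \<longlongrightarrow> 0) (at_right 0)"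
    unfolding \<omega>_def by (rule filterlim_compose[OF tendsto_tangent_modulus[OF assms(1,2) \<mu>(1)]])
  moreover have "\<phi> (a - b) \<le> dist_phi \<phi> K x * \<omega> (\<phi> (x - y) / dist_phi \<phi> K x)"
    if "x \<notin> K" "ereal lam \<le> reach_phi \<phi> K x"
      and "a \<in> nearest_phi \<phi> K x" "b \<in> nearest_phi \<phi> K y" for x y a b
    using nearest_phi_diff_le_tangent_modulus[OF assms(1,2) \<mu>(1) that(1) _ that(3,4)]
      order_less_le_trans[OF \<mu>(2) that(2)]
    by (simp add: \<omega>_def)
  ultimately show ?thesis by blast
qed

end
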